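(* Let $m\ge 2$ be an integer and consider the system $$\frac{du_i}{dt}=-a_iu_i+\sum_{j=1}^m w_{ij}f_j(u_j)+k\,\varphi_i(\rho)\,u_i+J_i-P\,u_i\sum_{j=1}^m\Gamma(u_j),\quad 1\le i\le m,\qquad \frac{d\rho}{dt}=\sum_{i=1}^m\gamma_iu_i-b\rho,\quad t>0,$$ with initial data $u_i(0)=u_i^0$, $\rho(0)=\rho^0$, where $\Gamma(s)=\dfrac{1}{1+\exp[-r(s-V)]}$ with $r>0$, $V\in\mathbb{R}$, and $P>0$. Assume $a_i,b,\beta,\eta_i,k$ are positive constants, $w_{ij},J_i,\gamma_i$ are real constants, the functions $f_i,\varphi_i:\mathbb{R}\to\mathbb{R}$ are locally Lipschitz continuous, and for all $s\in\mathbb{R}$ and $1\le i\le m$: $a_i>k$, $|f_i(s)|\le\beta$, and $\varphi_i(s)=1-\eta_is^2$. Then for every initial state $g^0=(u_1^0,\dots,u_m^0,\rho^0)\in\mathbb{R}^{m+1}$ there exists a unique global solution $g(t;g^0)=(u_1(t),\dots,u_m(t),\rho(t))$ defined for all $t\in[0,\infty)$. *)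

theory Defs
  imports "HOL-Analysis.Analysis"
begin

definition locally_lipschitz_real :: "(real \<Rightarrow> real) \<Rightarrow> bool" where
  "locally_lipschitz_real g \<longleftrightarrow> (\<forall>x. \<exists>e>0. \<exists>L. L-lipschitz_on (cball x e) g)"

definition Gam :: "real \<Rightarrow> real \<Rightarrow> real \<Rightarrow> real" where
  "Gam r V s = 1 / (1 + exp (- r * (s - V)))"

definition is_global_solution ::
  "('n::finite \<Rightarrow> real) \<Rightarrow> ('n \<Rightarrow> 'n \<Rightarrow> real) \<Rightarrow> ('n \<Rightarrow> real \<Rightarrow> real) \<Rightarrow> real
   \<Rightarrow> ('n \<Rightarrow> real \<Rightarrow> real) \<Rightarrow> ('n \<Rightarrow> real) \<Rightarrow> real \<Rightarrow> real \<Rightarrow> real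
   \<Rightarrow> ('n \<Rightarrow> real) \<Rightarrow> real
   \<Rightarrow> ('n \<Rightarrow> real) \<Rightarrow> real
   \<Rightarrow> (real \<Rightarrow> 'n \<Rightarrow> real) \<Rightarrow> (real \<Rightarrow> real) \<Rightarrow> bool" where
  "is_global_solution a w f k \<phi> J P r V \<gamma> b u0 \<rho>0 u \<rho> \<longleftrightarrow>
     (\<forall>i. continuous_on {0..} (\<lambda>t. u t i)) \<and> continuous_on {0..} \<rho> \<and>
     u 0 = u0 \<and> \<rho> 0 = \<rho>0 \<and>
     (\<forall>t>0. \<forall>i. ((\<lambda>s. u s i) has_real_derivative
         (- a i * u t i + (\<Sum>j\<in>UNIV. w i j * f j (u t j)) + k * \<phi> i (\<rho> t) * u t i + J i
          - P * u t i * (\<Sum>j\<in>UNIV. Gam r V (u t j)))) (at t)) \<and>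
     (\<forall>t>0. (\<rho> has_real_derivative ((\<Sum>i\<in>UNIV. \<gamma> i * u t i) - b * \<rho> t)) (at t))"

end

(* The vector field of the system is locally Lipschitz, so uniqueness follows from a Gronwall
   argument for the squared distance of two solutions. For existence, the a priori bound comes from
   a trapping box: because a_i > k and phi_i <= 1, on the faces u_i = +-R of a large box
   [-R,R]^m x [-S,S] the field points strictly inwards, and so it does on the faces rho = +-S
   because b > 0. Clamping the state to the box makes the field bounded and globally Lipschitz, so
   Picard iteration gives a solution for all t >= 0; the inward-pointing faces keep this solution
   inside the box, where clamping changes nothing, hence it solves the original system. *)

theory Submission
  imports Defs
begin

section \<open>Lipschitz bounds on cubes\<close>

definition l1_dist :: "('i::finite \<Rightarrow> real) \<Rightarrow> ('i \<Rightarrow> real) \<Rightarrow> real" where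
  "l1_dist y z = (\<Sum>j\<in>UNIV. \<bar>y j - z j\<bar>)"

lemma abs_diff_le_l1_dist: "\<bar>y j - z j\<bar> \<le> l1_dist y z"
  unfolding l1_dist_def by (rule member_le_sum) auto

lemma l1_dist_nonneg: "0 \<le> l1_dist y z"
  unfolding l1_dist_def by (rule sum_nonneg) auto

lemma l1_dist_le_card_mult:
  fixes y z :: "'i::finite \<Rightarrow> real"
  assumes "\<And>j. \<bar>y j - z j\<bar> \<le> c"
  shows "l1_dist y z \<le> real CARD('i) * c"
  using sum_mono[of UNIV "\<lambda>j. \<bar>y j - z j\<bar>" "\<lambda>_. c"] assms by (simp add: l1_dist_def)

lemma l1_dist_squared_le:
  fixes y z :: "'i::finite \<Rightarrow> real"
  shows "(l1_dist y z)\<^sup>2 \<le> real CARD('i) * (\<Sum>j\<in>UNIV. (y j - z j)\<^sup>2)"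
proof -
  define d where "d j = y j - z j" for j
  have "(l1_dist y z)\<^sup>2 = (\<Sum>i\<in>UNIV. \<Sum>j\<in>UNIV. \<bar>d i\<bar> * \<bar>d j\<bar>)"
    by (simp add: l1_dist_def d_def power2_eq_square sum_product)
  also have "\<dots> \<le> (\<Sum>i\<in>UNIV. \<Sum>j\<in>UNIV. ((d i)\<^sup>2 + (d j)\<^sup>2) / 2)"
  proof (intro sum_mono)
    fix i j
    have "0 \<le> (\<bar>d i\<bar> - \<bar>d j\<bar>)\<^sup>2" by simp
    then show "\<bar>d i\<bar> * \<bar>d j\<bar> \<le> ((d i)\<^sup>2 + (d j)\<^sup>2) / 2"
      by (simp add: power2_eq_square algebra_simps)
  qed
  also have "\<dots> = real CARD('i) * (\<Sum>j\<in>UNIV. (d j)\<^sup>2)"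
    by (simp add: sum.distrib sum_divide_distrib[symmetric] sum_distrib_left[symmetric] field_simps)
  finally show ?thesis by (simp add: d_def)
qed

definition cube :: "real \<Rightarrow> ('i \<Rightarrow> real) set" where
  "cube C = {y. \<forall>j. \<bar>y j\<bar> \<le> C}"

lemma cube_mono:
  assumes "C \<le> D"
  shows "cube C \<subseteq> cube D"
  by (auto simp: cube_def intro: order_trans[OF _ assms])

text \<open>A single constant bounds both the values and the difference quotients, so the property is
  monotone in it and finitely many components can share one constant.\<close>

definition bounded_lipschitz_on_cube :: "real \<Rightarrow> (('i::finite \<Rightarrow> real) \<Rightarrow> real) \<Rightarrow> bool" where
  "bounded_lipschitz_on_cube C h \<longleftrightarrow>
     (\<exists>M. \<forall>y\<in>cube C. \<forall>z\<in>cube C. \<bar>h y\<bar> \<le> M \<and> \<bar>h y - h z\<bar> \<le> M * l1_dist y z)"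

lemma bounded_lipschitz_on_cube_const: "bounded_lipschitz_on_cube C (\<lambda>y. c)"
  unfolding bounded_lipschitz_on_cube_def by (auto intro!: exI[of _ "\<bar>c\<bar>"] simp: l1_dist_nonneg)

lemma bounded_lipschitz_on_cube_coord: "bounded_lipschitz_on_cube C (\<lambda>y. y j)"
  unfolding bounded_lipschitz_on_cube_def
proof (intro exI ballI conjI)
  fix y z :: "'a \<Rightarrow> real" assume "y \<in> cube C"
  then show "\<bar>y j\<bar> \<le> max C 1" by (auto simp: cube_def intro: le_max_iff_disj[THEN iffD2])
  have "\<bar>y j - z j\<bar> \<le> 1 * l1_dist y z" by (simp add: abs_diff_le_l1_dist)
  also have "\<dots> \<le> max C 1 * l1_dist y z" by (intro mult_right_mono l1_dist_nonneg) auto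
  finally show "\<bar>y j - z j\<bar> \<le> max C 1 * l1_dist y z" .
qed

lemma bounded_lipschitz_on_cube_add:
  fixes g h :: "('i::finite \<Rightarrow> real) \<Rightarrow> real"
  assumes "bounded_lipschitz_on_cube C g" "bounded_lipschitz_on_cube C h"
  shows "bounded_lipschitz_on_cube C (\<lambda>y. g y + h y)"
proof -
  obtain M1 where g: "\<And>y z. y \<in> cube C \<Longrightarrow> z \<in> cube C \<Longrightarrow> \<bar>g y\<bar> \<le> M1 \<and> \<bar>g y - g z\<bar> \<le> M1 * l1_dist y z"
    using assms(1) unfolding bounded_lipschitz_on_cube_def by blast
  obtain M2 where h: "\<And>y z. y \<in> cube C \<Longrightarrow> z \<in> cube C \<Longrightarrow> \<bar>h y\<bar> \<le> M2 \<and> \<bar>h y - h z\<bar> \<le> M2 * l1_dist y z"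
    using assms(2) unfolding bounded_lipschitz_on_cube_def by blast
  show ?thesis unfolding bounded_lipschitz_on_cube_def
  proof (intro exI ballI)
    fix y z :: "'i \<Rightarrow> real" assume "y \<in> cube C" "z \<in> cube C"
    with g[of y z] h[of y z]
    show "\<bar>g y + h y\<bar> \<le> M1 + M2 \<and> \<bar>g y + h y - (g z + h z)\<bar> \<le> (M1 + M2) * l1_dist y z"
      by (auto simp: algebra_simps)
  qed
qed

lemma bounded_lipschitz_on_cube_minus:
  "bounded_lipschitz_on_cube C h \<Longrightarrow> bounded_lipschitz_on_cube C (\<lambda>y. - h y)"
  unfolding bounded_lipschitz_on_cube_def by (auto simp: abs_minus_commute)

lemma bounded_lipschitz_on_cube_diff:
  assumes "bounded_lipschitz_on_cube C g" "bounded_lipschitz_on_cube C h"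
  shows "bounded_lipschitz_on_cube C (\<lambda>y. g y - h y)"
  using bounded_lipschitz_on_cube_add[OF assms(1) bounded_lipschitz_on_cube_minus[OF assms(2)]]
  by simp

lemma bounded_lipschitz_on_cube_mult:
  fixes g h :: "('i::finite \<Rightarrow> real) \<Rightarrow> real"
  assumes "bounded_lipschitz_on_cube C g" "bounded_lipschitz_on_cube C h"
  shows "bounded_lipschitz_on_cube C (\<lambda>y. g y * h y)"
proof -
  obtain M1 where g: "\<And>y z. y \<in> cube C \<Longrightarrow> z \<in> cube C \<Longrightarrow> \<bar>g y\<bar> \<le> M1 \<and> \<bar>g y - g z\<bar> \<le> M1 * l1_dist y z"
    using assms(1) unfolding bounded_lipschitz_on_cube_def by blast
  obtain M2 where h: "\<And>y z. y \<in> cube C \<Longrightarrow> z \<in> cube C \<Longrightarrow> \<bar>h y\<bar> \<le> M2 \<and> \<bar>h y - h z\<bar> \<le> M2 * l1_dist y z"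
    using assms(2) unfolding bounded_lipschitz_on_cube_def by blast
  show ?thesis unfolding bounded_lipschitz_on_cube_def
  proof (intro exI ballI conjI)
    fix y z :: "'i \<Rightarrow> real" assume y: "y \<in> cube C" and z: "z \<in> cube C"
    have M1: "0 \<le> M1" and M2: "0 \<le> M2" using g[OF y y] h[OF y y] by auto
    have "\<bar>g y * h y\<bar> \<le> M1 * M2" using g[OF y y] h[OF y y] by (simp add: abs_mult mult_mono')
    then show "\<bar>g y * h y\<bar> \<le> 2 * \<bar>M1\<bar> * \<bar>M2\<bar>" using M1 M2 by simp
    have "g y * h y - g z * h z = g y * (h y - h z) + h z * (g y - g z)"
      by (simp add: algebra_simps)
    then have "\<bar>g y * h y - g z * h z\<bar> \<le> \<bar>g y\<bar> * \<bar>h y - h z\<bar> + \<bar>h z\<bar> * \<bar>g y - g z\<bar>"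
      by (simp add: abs_mult[symmetric] abs_triangle_ineq)
    also have "\<dots> \<le> M1 * (M2 * l1_dist y z) + M2 * (M1 * l1_dist y z)"
      using g[OF y z] h[OF y z] h[OF z y] by (intro add_mono mult_mono) auto
    finally show "\<bar>g y * h y - g z * h z\<bar> \<le> 2 * \<bar>M1\<bar> * \<bar>M2\<bar> * l1_dist y z"
      using M1 M2 by (simp add: algebra_simps)
  qed
qed

lemma bounded_lipschitz_on_cube_sum:
  "finite A \<Longrightarrow> (\<And>a. a \<in> A \<Longrightarrow> bounded_lipschitz_on_cube C (h a)) \<Longrightarrow>
    bounded_lipschitz_on_cube C (\<lambda>y. \<Sum>a\<in>A. h a y)"
  by (induction A rule: finite_induct)
    (auto intro: bounded_lipschitz_on_cube_add bounded_lipschitz_on_cube_const)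

lemmas bounded_lipschitz_on_cube_intros =
  bounded_lipschitz_on_cube_const bounded_lipschitz_on_cube_coord bounded_lipschitz_on_cube_add
  bounded_lipschitz_on_cube_diff bounded_lipschitz_on_cube_minus bounded_lipschitz_on_cube_mult
  bounded_lipschitz_on_cube_sum

lemma bounded_lipschitz_on_cube_compose:
  assumes "L-lipschitz_on {-C..C} g"
  shows "bounded_lipschitz_on_cube C (\<lambda>y. g (y j))"
  unfolding bounded_lipschitz_on_cube_def
proof (intro exI ballI conjI)
  fix y z :: "'a \<Rightarrow> real" assume "y \<in> cube C" "z \<in> cube C"
  then have yz: "y j \<in> {-C..C}" "z j \<in> {-C..C}" and C: "0 \<le> C"
    by (auto simp: cube_def abs_le_iff dest: spec[of _ j])
  have L: "0 \<le> L" using lipschitz_on_nonneg[OF assms] .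
  have "0 \<in> {-C..C}" using C by simp
  from lipschitz_onD[OF assms yz(1) this] have "\<bar>g (y j) - g 0\<bar> \<le> L * \<bar>y j - 0\<bar>"
    by (simp add: dist_real_def)
  also have "\<dots> \<le> L * C" using yz L by (intro mult_left_mono) auto
  finally show "\<bar>g (y j)\<bar> \<le> \<bar>g 0\<bar> + L * C + L" using L by linarith
  have "\<bar>g (y j) - g (z j)\<bar> \<le> L * \<bar>y j - z j\<bar>"
    using lipschitz_onD[OF assms yz] by (simp add: dist_real_def)
  also have "\<dots> \<le> L * l1_dist y z" using L by (intro mult_left_mono abs_diff_le_l1_dist)
  also have "\<dots> \<le> (\<bar>g 0\<bar> + L * C + L) * l1_dist y z"
    using L C by (intro mult_right_mono l1_dist_nonneg) auto
  finally show "\<bar>g (y j) - g (z j)\<bar> \<le> (\<bar>g 0\<bar> + L * C + L) * l1_dist y z" .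
qed

definition locally_lipschitz_field :: "(('i::finite \<Rightarrow> real) \<Rightarrow> 'j \<Rightarrow> real) \<Rightarrow> bool" where
  "locally_lipschitz_field F \<longleftrightarrow> (\<forall>C j. bounded_lipschitz_on_cube C (\<lambda>y. F y j))"

lemma locally_lipschitz_fieldE:
  fixes F :: "('i::finite \<Rightarrow> real) \<Rightarrow> 'j::finite \<Rightarrow> real"
  assumes "locally_lipschitz_field F"
  obtains M where "0 \<le> M" and "\<And>y z j. y \<in> cube C \<Longrightarrow> z \<in> cube C \<Longrightarrow>
    \<bar>F y j\<bar> \<le> M \<and> \<bar>F y j - F z j\<bar> \<le> M * l1_dist y z"
proof -
  have "eventually (\<lambda>M. \<forall>y\<in>cube C. \<forall>z\<in>cube C. \<bar>F y j\<bar> \<le> M \<and> \<bar>F y j - F z j\<bar> \<le> M * l1_dist y z)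
          at_top" for j
  proof -
    obtain Mj where Mj: "\<And>y z. y \<in> cube C \<Longrightarrow> z \<in> cube C \<Longrightarrow>
        \<bar>F y j\<bar> \<le> Mj \<and> \<bar>F y j - F z j\<bar> \<le> Mj * l1_dist y z"
      using assms unfolding locally_lipschitz_field_def bounded_lipschitz_on_cube_def by blast
    show ?thesis
      using eventually_ge_at_top[of Mj]
    proof eventually_elim
      case (elim M)
      then show ?case
        using Mj by (meson l1_dist_nonneg mult_right_mono order_trans)
    qed
  qed
  then have "eventually (\<lambda>M. \<forall>j. \<forall>y\<in>cube C. \<forall>z\<in>cube C.
      \<bar>F y j\<bar> \<le> M \<and> \<bar>F y j - F z j\<bar> \<le> M * l1_dist y z) at_top"
    by (rule eventually_all_finite)
  with eventually_ge_at_top[of 0]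
  have "eventually (\<lambda>M. 0 \<le> M \<and> (\<forall>j. \<forall>y\<in>cube C. \<forall>z\<in>cube C.
      \<bar>F y j\<bar> \<le> M \<and> \<bar>F y j - F z j\<bar> \<le> M * l1_dist y z)) at_top"
    by (rule eventually_conj)
  from eventually_happens'[OF trivial_limit_at_top_linorder this]
  obtain M where "0 \<le> M" "\<forall>j. \<forall>y\<in>cube C. \<forall>z\<in>cube C.
      \<bar>F y j\<bar> \<le> M \<and> \<bar>F y j - F z j\<bar> \<le> M * l1_dist y z"
    by blast
  then show ?thesis by (intro that) auto
qed

lemma lipschitz_on_interval_if_locally_lipschitz_real:
  assumes "locally_lipschitz_real g"
  obtains L where "L-lipschitz_on {-C..C} g"
proof -
  have "local_lipschitz {0::real} {-C..C} (\<lambda>_. g)"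
  proof (rule local_lipschitzI)
    fix x assume "x \<in> {-C..C}"
    obtain e L where "e > 0" "L-lipschitz_on (cball x e) g"
      using assms unfolding locally_lipschitz_real_def by blast
    then show "\<exists>u>0. \<exists>L. \<forall>t\<in>cball t u \<inter> {0}. L-lipschitz_on (cball x u \<inter> {-C..C}) g" for t
      by (meson inf_le1 lipschitz_on_subset)
  qed
  from local_lipschitz_compact_implies_lipschitz[OF this] that show ?thesis by auto
qed

lemma lipschitz_on_real_if_increments_le:
  fixes f :: "real \<Rightarrow> real"
  assumes "\<And>x y. x \<in> S \<Longrightarrow> y \<in> S \<Longrightarrow> x \<le> y \<Longrightarrow> \<bar>f y - f x\<bar> \<le> L * (y - x)" "0 \<le> L"
  shows "L-lipschitz_on S f"
proof (rule lipschitz_onI)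
  fix x y assume "x \<in> S" "y \<in> S"
  then show "dist (f x) (f y) \<le> L * dist x y"
    using assms(1)[of x y] assms(1)[of y x]
    by (cases "x \<le> y") (auto simp: dist_real_def abs_minus_commute)
qed (rule assms(2))

lemma Gam_lipschitz:
  assumes "r > 0"
  shows "r-lipschitz_on UNIV (Gam r V)"
proof -
  define e where "e x = exp (- r * (x - V))" for x
  have deriv: "(Gam r V has_real_derivative r * e x / (1 + e x)\<^sup>2) (at x)" for x
  proof -
    have "1 + e x \<noteq> 0" unfolding e_def by (smt (verit) exp_gt_zero)
    then show ?thesis unfolding Gam_def[abs_def] e_def
      by (auto intro!: derivative_eq_intros simp: power2_eq_square field_simps)
  qed
  have bound: "\<bar>r * e x / (1 + e x)\<^sup>2\<bar> \<le> r" for x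
  proof -
    have e: "e x > 0" unfolding e_def by simp
    have "(1 + e x)\<^sup>2 = e x + (1 + e x * (1 + e x))" by (simp add: power2_eq_square algebra_simps)
    also have "\<dots> \<ge> e x" using e by simp
    finally have "e x / (1 + e x)\<^sup>2 \<le> 1" using e by simp
    then have "r * (e x / (1 + e x)\<^sup>2) \<le> r"
      using assms by (simp add: mult_left_le del: times_divide_eq_right)
    then show ?thesis using e assms by simp
  qed
  have increment: "\<bar>Gam r V y - Gam r V x\<bar> \<le> r * (y - x)" if "x \<le> y" for x y
  proof (cases "x = y")
    case False
    with that have xy: "x < y" by simp
    obtain z where "Gam r V y - Gam r V x = (y - x) * (r * e z / (1 + e z)\<^sup>2)"
      using MVT2[OF xy, of "Gam r V" "\<lambda>x. r * e x / (1 + e x)\<^sup>2"] deriv by blast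
    then have "\<bar>Gam r V y - Gam r V x\<bar> = (y - x) * \<bar>r * e z / (1 + e z)\<^sup>2\<bar>"
      using xy by (simp only: abs_mult)
    also have "\<dots> \<le> (y - x) * r" using bound[of z] xy by (intro mult_left_mono) auto
    finally show ?thesis by (simp add: mult.commute)
  qed simp
  show ?thesis
    using increment assms by (intro lipschitz_on_real_if_increments_le) auto
qed

section \<open>Picard iteration for bounded, globally Lipschitz fields\<close>

definition solves_ivp ::
  "(('i::finite \<Rightarrow> real) \<Rightarrow> 'i \<Rightarrow> real) \<Rightarrow> ('i \<Rightarrow> real) \<Rightarrow> (real \<Rightarrow> 'i \<Rightarrow> real) \<Rightarrow> bool" where
  "solves_ivp F x0 x \<longleftrightarrow> x 0 = x0 \<and> (\<forall>j. continuous_on {0..} (\<lambda>t. x t j)) \<and>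
     (\<forall>t>0. \<forall>j. ((\<lambda>s. x s j) has_real_derivative F (x t) j) (at t))"

lemma has_integral_cmult_power:
  fixes c t :: real
  assumes "0 \<le> t"
  shows "((\<lambda>s. c * s ^ k) has_integral c * t ^ Suc k / Suc k) {0..t}"
proof -
  have "((\<lambda>s. c * s ^ k) has_integral c * t ^ Suc k / Suc k - c * 0 ^ Suc k / Suc k) {0..t}"
  proof (rule fundamental_theorem_of_calculus[OF assms])
    fix s assume "s \<in> {0..t}"
    have "((\<lambda>s. s ^ Suc k) has_real_derivative Suc k * s ^ k) (at s within {0..t})"
      using DERIV_pow[of "Suc k" s] by (simp add: has_field_derivative_at_within)
    from DERIV_cmult[OF this, of "c / Suc k"]
    have "((\<lambda>s. c * s ^ Suc k / Suc k) has_real_derivative c * s ^ k) (at s within {0..t})"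
      by (simp del: of_nat_Suc)
    then show "((\<lambda>s. c * s ^ Suc k / Suc k) has_vector_derivative c * s ^ k) (at s within {0..t})"
      by (simp add: has_real_derivative_iff_has_vector_derivative)
  qed
  then show ?thesis by simp
qed

lemma integral_from_0_diff:
  assumes "continuous_on {0..} g" "0 \<le> s" "s \<le> t"
  shows "integral {0..t} g - integral {0..s} g = integral {s..t} (g :: real \<Rightarrow> real)"
proof -
  have "g integrable_on {0..t}"
    by (rule integrable_continuous_real, rule continuous_on_subset[OF assms(1)]) auto
  from Henstock_Kurzweil_Integration.integral_combine[OF assms(2,3) this] show ?thesis by simp
qed

lemma has_real_derivative_if_integral_equation:
  fixes g x :: "real \<Rightarrow> real"
  assumes g: "continuous_on {0..} g" and x: "\<And>t. 0 \<le> t \<Longrightarrow> x t = c + integral {0..t} g"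
    and t: "0 < t"
  shows "(x has_real_derivative g t) (at t)"
proof -
  have "((\<lambda>u. integral {0..u} g) has_real_derivative g t) (at t within {0..t + 1})"
    by (rule integral_has_real_derivative[OF continuous_on_subset[OF g]]) (use t in auto)
  then have "((\<lambda>u. c + integral {0..u} g) has_real_derivative g t) (at t)"
    using at_within_Icc_at[of 0 t "t + 1"] t by (auto intro!: derivative_eq_intros)
  then show ?thesis
    by (rule has_field_derivative_transform_within_open[of _ _ _ "{0<..}"]) (use t x in auto)
qed

primrec picard_iterate ::
  "(('i::finite \<Rightarrow> real) \<Rightarrow> 'i \<Rightarrow> real) \<Rightarrow> ('i \<Rightarrow> real) \<Rightarrow> nat \<Rightarrow> real \<Rightarrow> 'i \<Rightarrow> real" where
  "picard_iterate G x0 0 = (\<lambda>t. x0)"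
| "picard_iterate G x0 (Suc n) = (\<lambda>t j. x0 j + integral {0..t} (\<lambda>s. G (picard_iterate G x0 n s) j))"

locale bounded_lipschitz_field =
  fixes G :: "('i::finite \<Rightarrow> real) \<Rightarrow> 'i \<Rightarrow> real" and M :: real
  assumes bounded: "\<And>z i. \<bar>G z i\<bar> \<le> M"
    and lipschitz: "\<And>z z' i. \<bar>G z i - G z' i\<bar> \<le> M * l1_dist z z'"
begin

definition N :: real where "N = real CARD('i)"

lemma M_nonneg: "0 \<le> M"
  using bounded[of undefined undefined] by linarith

lemma continuous_on_along_lipschitz_curve:
  fixes y :: "real \<Rightarrow> 'i \<Rightarrow> real"
  assumes "\<And>j. K-lipschitz_on {0..} (\<lambda>t. y t j)"
  shows "continuous_on {0..} (\<lambda>t. G (y t) i)"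
proof (rule lipschitz_on_continuous_on)
  show "(M * N * K)-lipschitz_on {0..} (\<lambda>t. G (y t) i)"
  proof (rule lipschitz_onI)
    fix s t :: real assume "s \<in> {0..}" "t \<in> {0..}"
    then have "\<bar>y s j - y t j\<bar> \<le> K * dist s t" for j
      using lipschitz_onD[OF assms] by (simp add: dist_real_def)
    then have "l1_dist (y s) (y t) \<le> N * (K * dist s t)"
      unfolding N_def by (rule l1_dist_le_card_mult)
    then have "M * l1_dist (y s) (y t) \<le> M * (N * (K * dist s t))"
      using M_nonneg by (rule mult_left_mono)
    with lipschitz[where z = "y s" and z' = "y t" and i = i]
    show "dist (G (y s) i) (G (y t) i) \<le> M * N * K * dist s t"
      by (simp add: dist_real_def mult.assoc)
  next
    show "0 \<le> M * N * K"
      using M_nonneg lipschitz_on_nonneg[OF assms] by (simp add: N_def)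
  qed
qed

end

locale picard_iteration = bounded_lipschitz_field G M
  for G :: "('i::finite \<Rightarrow> real) \<Rightarrow> 'i \<Rightarrow> real" and M :: real +
  fixes x0 :: "'i \<Rightarrow> real"
begin

abbreviation iterate :: "nat \<Rightarrow> real \<Rightarrow> 'i \<Rightarrow> real" where
  "iterate \<equiv> picard_iterate G x0"

lemma iterate_lipschitz: "M-lipschitz_on {0..} (\<lambda>t. iterate n t j)"
proof (induction n arbitrary: j)
  case 0
  then show ?case using M_nonneg by (simp add: lipschitz_on_def)
next
  case (Suc n)
  have cont: "continuous_on {0..} (\<lambda>s. G (iterate n s) j)"
    by (rule continuous_on_along_lipschitz_curve) (rule Suc.IH)
  have increment: "\<bar>iterate (Suc n) t j - iterate (Suc n) s j\<bar> \<le> M * (t - s)"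
    if "0 \<le> s" "s \<le> t" for s t
  proof -
    have "iterate (Suc n) t j - iterate (Suc n) s j = integral {s..t} (\<lambda>s. G (iterate n s) j)"
      using integral_from_0_diff[OF cont that] by simp
    also have "\<bar>\<dots>\<bar> \<le> M * (t - s)"
      using integral_bound[OF that(2) continuous_on_subset[OF cont], of M] that bounded by auto
    finally show ?thesis .
  qed
  show ?case
    using increment M_nonneg by (intro lipschitz_on_real_if_increments_le) auto
qed

lemma continuous_on_iterate_field: "continuous_on {0..} (\<lambda>s. G (iterate n s) j)"
  by (rule continuous_on_along_lipschitz_curve) (rule iterate_lipschitz)

definition step_bound :: "nat \<Rightarrow> real \<Rightarrow> real" where
  "step_bound n t = (N * M * t) ^ Suc n / fact (Suc n)"

lemma iterate_step_eq_integral: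
  "iterate (Suc (Suc n)) t j - iterate (Suc n) t j
    = integral {0..t} (\<lambda>s. G (iterate (Suc n) s) j - G (iterate n s) j)"
proof -
  have integrable: "(\<lambda>s. G (iterate m s) j) integrable_on {0..t}" for m
    by (rule integrable_continuous_real, rule continuous_on_subset[OF continuous_on_iterate_field])
      auto
  have unfold: "iterate (Suc m) t j = x0 j + integral {0..t} (\<lambda>s. G (iterate m s) j)" for m
    by simp
  show ?thesis
    unfolding unfold integral_diff[OF integrable integrable] by simp
qed

lemma iterate_step_le: "0 \<le> t \<Longrightarrow> l1_dist (iterate (Suc n) t) (iterate n t) \<le> step_bound n t"
proof (induction n arbitrary: t)
  case 0
  have "\<bar>iterate (Suc 0) t j - iterate 0 t j\<bar> \<le> M * t" for j
  proof -
    have "t * \<bar>G x0 j\<bar> \<le> t * M" using 0 bounded[of x0 j] by (intro mult_left_mono)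
    then show ?thesis using 0 by (simp add: abs_mult mult.commute)
  qed
  then have "l1_dist (iterate (Suc 0) t) (iterate 0 t) \<le> N * (M * t)"
    unfolding N_def by (rule l1_dist_le_card_mult)
  then show ?case by (simp add: step_bound_def)
next
  case (Suc n)
  define c where "c = M * (N * M) ^ Suc n / fact (Suc n)"
  have "\<bar>iterate (Suc (Suc n)) t j - iterate (Suc n) t j\<bar> \<le> c * t ^ Suc (Suc n) / Suc (Suc n)" for j
  proof -
    let ?d = "\<lambda>s. G (iterate (Suc n) s) j - G (iterate n s) j"
    have "norm (integral {0..t} ?d) \<le> integral {0..t} (\<lambda>s. c * s ^ Suc n)"
    proof (rule Henstock_Kurzweil_Integration.integral_norm_bound_integral)
      show "?d integrable_on {0..t}"
        by (rule integrable_continuous_real, intro continuous_on_diff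
            continuous_on_subset[OF continuous_on_iterate_field]) auto
      show "(\<lambda>s. c * s ^ Suc n) integrable_on {0..t}"
        using has_integral_cmult_power[OF Suc.prems] by blast
      fix s assume s: "s \<in> {0..t}"
      have "\<bar>?d s\<bar> \<le> M * l1_dist (iterate (Suc n) s) (iterate n s)" by (rule lipschitz)
      also have "\<dots> \<le> M * step_bound n s"
        using Suc.IH[of s] s M_nonneg by (intro mult_left_mono) auto
      also have "\<dots> = c * s ^ Suc n" by (simp add: step_bound_def c_def power_mult_distrib)
      finally show "norm (?d s) \<le> c * s ^ Suc n" by simp
    qed
    also have "\<dots> = c * t ^ Suc (Suc n) / Suc (Suc n)"
      using has_integral_cmult_power[OF Suc.prems] by blast
    finally show ?thesis by (simp only: iterate_step_eq_integral real_norm_def)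
  qed
  then have "l1_dist (iterate (Suc (Suc n)) t) (iterate (Suc n) t)
      \<le> N * (c * t ^ Suc (Suc n) / Suc (Suc n))"
    unfolding N_def by (rule l1_dist_le_card_mult)
  also have "\<dots> = step_bound (Suc n) t"
    unfolding step_bound_def c_def by (simp add: field_simps power_mult_distrib del: of_nat_Suc)
  finally show ?case .
qed

lemma summable_step_bound: "summable (\<lambda>n. step_bound n t)"
proof -
  have "summable (\<lambda>n. (N * M * t) ^ n / fact n)"
    using summable_exp[of "N * M * t"] by (simp add: divide_inverse mult.commute)
  then show ?thesis unfolding step_bound_def by (subst summable_Suc_iff)
qed

lemma step_bound_mono: "0 \<le> s \<Longrightarrow> s \<le> t \<Longrightarrow> step_bound n s \<le> step_bound n t"
  unfolding step_bound_def using M_nonneg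
  by (intro divide_right_mono power_mono mult_left_mono) (auto simp: N_def)

lemma summable_iterate_increments:
  assumes "0 \<le> t"
  shows "summable (\<lambda>n. iterate (Suc n) t j - iterate n t j)"
proof (rule summable_comparison_test'[OF summable_step_bound[of t]])
  show "norm (iterate (Suc n) t j - iterate n t j) \<le> step_bound n t" for n
    using order_trans[OF abs_diff_le_l1_dist iterate_step_le[OF assms]]
    by (simp only: real_norm_def)
qed

definition limit :: "real \<Rightarrow> 'i \<Rightarrow> real" where
  "limit t j = x0 j + (\<Sum>n. iterate (Suc n) t j - iterate n t j)"

lemma sum_iterate_increments: "(\<Sum>k<n. iterate (Suc k) t j - iterate k t j) = iterate n t j - x0 j"
  by (subst sum_lessThan_telescope) simp

lemma iterate_tendsto_limit:
  assumes "0 \<le> t"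
  shows "(\<lambda>n. iterate n t j) \<longlonglongrightarrow> limit t j"
proof -
  have "(\<lambda>n. x0 j + (\<Sum>k<n. iterate (Suc k) t j - iterate k t j)) \<longlonglongrightarrow> limit t j"
    unfolding limit_def
    by (intro tendsto_add tendsto_const summable_LIMSEQ summable_iterate_increments assms)
  then show ?thesis by (simp only: sum_iterate_increments) simp
qed

definition tail_bound :: "nat \<Rightarrow> real \<Rightarrow> real" where
  "tail_bound n t = (\<Sum>k. step_bound (k + n) t)"

lemma tail_bound_tendsto_zero: "(\<lambda>n. tail_bound n t) \<longlonglongrightarrow> 0"
proof -
  have "(\<lambda>n. (\<Sum>k. step_bound k t) - (\<Sum>k<n. step_bound k t))
      \<longlonglongrightarrow> (\<Sum>k. step_bound k t) - (\<Sum>k. step_bound k t)"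
    by (intro tendsto_diff tendsto_const summable_LIMSEQ summable_step_bound)
  then show ?thesis
    by (simp add: tail_bound_def suminf_minus_initial_segment[OF summable_step_bound])
qed

lemma limit_minus_iterate_le:
  assumes "0 \<le> s" "s \<le> t"
  shows "\<bar>limit s j - iterate n s j\<bar> \<le> tail_bound n t"
proof -
  have "limit s j - iterate n s j = (\<Sum>k. iterate (Suc (k + n)) s j - iterate (k + n) s j)"
    using suminf_split_initial_segment[OF summable_iterate_increments[OF assms(1)], of j n]
    by (simp only: limit_def sum_iterate_increments)
  also have "norm \<dots> \<le> tail_bound n t"
    unfolding tail_bound_def
  proof (rule norm_suminf_le)
    show "norm (iterate (Suc (k + n)) s j - iterate (k + n) s j) \<le> step_bound (k + n) t" for k
      using order_trans[OF abs_diff_le_l1_dist iterate_step_le[OF assms(1)]]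
        step_bound_mono[OF assms]
      by (simp only: real_norm_def) (rule order_trans)
    show "summable (\<lambda>k. step_bound (k + n) t)"
      using summable_step_bound by (rule summable_ignore_initial_segment)
  qed
  finally show ?thesis by simp
qed

lemma limit_lipschitz: "M-lipschitz_on {0..} (\<lambda>t. limit t j)"
proof (rule lipschitz_onI)
  fix s t :: real assume "s \<in> {0..}" "t \<in> {0..}"
  then show "dist (limit s j) (limit t j) \<le> M * dist s t"
    using lipschitz_onD[OF iterate_lipschitz]
    by (intro LIMSEQ_le_const2[OF tendsto_dist[OF iterate_tendsto_limit iterate_tendsto_limit]])
      auto
qed (rule M_nonneg)

lemma continuous_on_limit_field: "continuous_on {0..} (\<lambda>s. G (limit s) j)"
  by (rule continuous_on_along_lipschitz_curve) (rule limit_lipschitz)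

lemma limit_integral_equation_error_le:
  assumes t: "0 \<le> t"
  shows "\<bar>limit t j - x0 j - integral {0..t} (\<lambda>s. G (limit s) j)\<bar>
    \<le> tail_bound (Suc n) t + t * (M * (N * tail_bound n t))"
proof -
  let ?d = "\<lambda>s. G (iterate n s) j - G (limit s) j"
  have integrable: "(\<lambda>s. G (iterate n s) j) integrable_on {0..t}"
      "(\<lambda>s. G (limit s) j) integrable_on {0..t}"
    by (intro integrable_continuous_real continuous_on_subset[OF continuous_on_iterate_field]
        continuous_on_subset[OF continuous_on_limit_field]; force)+
  have "limit t j - x0 j - integral {0..t} (\<lambda>s. G (limit s) j)
      = (limit t j - iterate (Suc n) t j) + integral {0..t} ?d"
    unfolding integral_diff[OF integrable] by simp
  also have "\<bar>\<dots>\<bar> \<le> tail_bound (Suc n) t + M * (N * tail_bound n t) * (t - 0)"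
  proof (rule order_trans[OF abs_triangle_ineq add_mono])
    show "\<bar>limit t j - iterate (Suc n) t j\<bar> \<le> tail_bound (Suc n) t"
      using t by (rule limit_minus_iterate_le) simp
    have "norm (integral {0..t} ?d) \<le> M * (N * tail_bound n t) * (t - 0)"
    proof (rule integral_bound[OF t])
      show "continuous_on {0..t} ?d"
        by (intro continuous_on_diff continuous_on_subset[OF continuous_on_iterate_field]
            continuous_on_subset[OF continuous_on_limit_field]) auto
      fix s assume s: "s \<in> {0..t}"
      have "\<bar>?d s\<bar> \<le> M * l1_dist (iterate n s) (limit s)" by (rule lipschitz)
      also have "\<dots> \<le> M * (N * tail_bound n t)"
        using M_nonneg s limit_minus_iterate_le[of s t]
        by (intro mult_left_mono) (auto simp: N_def abs_minus_commute intro: l1_dist_le_card_mult)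
      finally show "norm (?d s) \<le> M * (N * tail_bound n t)" by simp
    qed
    then show "\<bar>integral {0..t} ?d\<bar> \<le> M * (N * tail_bound n t) * (t - 0)" by simp
  qed
  finally show ?thesis by (simp add: mult.commute)
qed

lemma limit_integral_equation:
  assumes "0 \<le> t"
  shows "limit t j = x0 j + integral {0..t} (\<lambda>s. G (limit s) j)"
proof -
  have "(\<lambda>n. tail_bound (Suc n) t + t * (M * (N * tail_bound n t))) \<longlonglongrightarrow> 0 + t * (M * (N * 0))"
    by (intro tendsto_add tendsto_mult tendsto_const LIMSEQ_Suc tail_bound_tendsto_zero)
  then have "\<bar>limit t j - x0 j - integral {0..t} (\<lambda>s. G (limit s) j)\<bar> \<le> 0"
    by (intro LIMSEQ_le_const) (auto intro: limit_integral_equation_error_le[OF assms])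
  then show ?thesis by simp
qed

lemma limit_solves_ivp: "solves_ivp G x0 limit"
  unfolding solves_ivp_def
proof (intro conjI allI impI)
  show "limit 0 = x0"
    using limit_integral_equation[of 0] by auto
  show "continuous_on {0..} (\<lambda>t. limit t j)" for j
    by (rule lipschitz_on_continuous_on) (rule limit_lipschitz)
  show "((\<lambda>s. limit s j) has_real_derivative G (limit t) j) (at t)" if "0 < t" for t j
    using continuous_on_limit_field limit_integral_equation that
    by (rule has_real_derivative_if_integral_equation)
qed

end

lemma bounded_lipschitz_field_solvable:
  assumes "bounded_lipschitz_field G M"
  shows "\<exists>x. solves_ivp G x0 x"
proof -
  interpret picard_iteration G M x0 using assms unfolding picard_iteration_def .
  show ?thesis using limit_solves_ivp by blast
qed

section \<open>Barriers, uniqueness and trapping boxes\<close>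

lemma stays_below_barrier:
  fixes y y' :: "real \<Rightarrow> real"
  assumes cont: "continuous_on {0..} y"
    and deriv: "\<And>t. 0 < t \<Longrightarrow> (y has_real_derivative y' t) (at t)"
    and start: "y 0 \<le> c" and barrier: "\<And>t. 0 < t \<Longrightarrow> c \<le> y t \<Longrightarrow> y' t < 0"
    and t: "0 \<le> t"
  shows "y t \<le> c"
proof (rule ccontr)
  assume "\<not> y t \<le> c"
  then have yt: "c < y t" by simp
  define A where "A = {0..t} \<inter> y -` {..c}"
  have "closed A" unfolding A_def
    by (rule continuous_closed_preimage[OF continuous_on_subset[OF cont]]) auto
  moreover have "0 \<in> A" using start t unfolding A_def by auto
  moreover have bdd: "bdd_above A" unfolding A_def by (rule bdd_aboveI[of _ t]) auto
  ultimately have "Sup A \<in> A" by (intro closed_contains_Sup) auto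
  define s where "s = Sup A"
  have s: "0 \<le> s" "s \<le> t" "y s \<le> c"
    using \<open>Sup A \<in> A\<close> unfolding A_def s_def by auto
  with yt have "s < t" by (cases "s = t") auto
  have above: "c < y u" if "s < u" "u \<le> t" for u
  proof (rule ccontr)
    assume "\<not> c < y u"
    then have "u \<in> A" using that s unfolding A_def by auto
    then have "u \<le> s" unfolding s_def using bdd by (rule cSup_upper)
    then show False using that by simp
  qed
  have "y t < y s"
  proof (rule DERIV_neg_imp_decreasing_open[OF \<open>s < t\<close>])
    fix u assume "s < u" "u < t"
    then show "\<exists>l. (y has_real_derivative l) (at u) \<and> l < 0"
      using deriv[of u] barrier[of u] above[of u] s by force
  qed (use continuous_on_subset[OF cont] s in auto)
  then show False using s yt by simp
qed

lemma stays_above_barrier: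
  fixes y y' :: "real \<Rightarrow> real"
  assumes cont: "continuous_on {0..} y"
    and deriv: "\<And>t. 0 < t \<Longrightarrow> (y has_real_derivative y' t) (at t)"
    and start: "c \<le> y 0" and barrier: "\<And>t. 0 < t \<Longrightarrow> y t \<le> c \<Longrightarrow> 0 < y' t"
    and t: "0 \<le> t"
  shows "c \<le> y t"
proof -
  have "- y t \<le> - c"
  proof (rule stays_below_barrier[where y = "\<lambda>s. - y s" and y' = "\<lambda>s. - y' s"])
    show "continuous_on {0..} (\<lambda>s. - y s)" using cont by (rule continuous_on_minus)
    show "((\<lambda>s. - y s) has_real_derivative - y' s) (at s)" if "0 < s" for s
      using deriv[OF that] by (rule DERIV_minus)
  qed (use start barrier t in auto)
  then show ?thesis by simp
qed

lemma solves_ivp_stays_in_box: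
  assumes sol: "solves_ivp G x0 x" and start: "\<And>j. \<bar>x0 j\<bar> \<le> R j"
    and upper: "\<And>y j. R j \<le> y j \<Longrightarrow> G y j < 0"
    and lower: "\<And>y j. y j \<le> - R j \<Longrightarrow> 0 < G y j"
    and t: "0 \<le> t"
  shows "\<bar>x t j\<bar> \<le> R j"
proof -
  have cont: "continuous_on {0..} (\<lambda>t. x t j)"
    and deriv: "\<And>t. 0 < t \<Longrightarrow> ((\<lambda>s. x s j) has_real_derivative G (x t) j) (at t)"
    and "x 0 = x0"
    using sol unfolding solves_ivp_def by auto
  with start have "\<bar>x 0 j\<bar> \<le> R j" by simp
  then have "x 0 j \<le> R j" "- R j \<le> x 0 j" by (simp_all add: abs_le_iff)
  then have "x t j \<le> R j" "- R j \<le> x t j"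
    using stays_below_barrier[OF cont deriv _ upper t] stays_above_barrier[OF cont deriv _ lower t]
    by auto
  then show ?thesis by simp
qed

lemma continuous_curve_in_cube:
  fixes x :: "real \<Rightarrow> 'i::finite \<Rightarrow> real"
  assumes "\<And>j. continuous_on {0..} (\<lambda>t. x t j)"
  obtains C where "\<And>s. s \<in> {0..T} \<Longrightarrow> x s \<in> cube C"
proof -
  have "continuous_on {0..T} (\<lambda>s. \<Sum>j\<in>UNIV. \<bar>x s j\<bar>)"
    by (intro continuous_intros continuous_on_subset[OF assms]) auto
  then have "bounded ((\<lambda>s. \<Sum>j\<in>UNIV. \<bar>x s j\<bar>) ` {0..T})"
    by (intro compact_imp_bounded compact_continuous_image) auto
  then obtain C where C: "\<forall>v\<in>(\<lambda>s. \<Sum>j\<in>UNIV. \<bar>x s j\<bar>) ` {0..T}. \<bar>v\<bar> \<le> C"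
    unfolding bounded_iff real_norm_def by blast
  have "\<bar>x s j\<bar> \<le> C" if "s \<in> {0..T}" for s j
  proof -
    have "\<bar>x s j\<bar> \<le> (\<Sum>j\<in>UNIV. \<bar>x s j\<bar>)" by (rule member_le_sum) auto
    also have "\<dots> \<le> C" using C that by force
    finally show ?thesis .
  qed
  then show ?thesis using that unfolding cube_def by blast
qed

lemma nonpos_if_deriv_le_mult:
  fixes E E' :: "real \<Rightarrow> real"
  assumes T: "0 \<le> T" and cont: "continuous_on {0..T} E" and start: "E 0 = 0"
    and deriv: "\<And>s. 0 < s \<Longrightarrow> s < T \<Longrightarrow> (E has_real_derivative E' s) (at s)"
    and bound: "\<And>s. 0 < s \<Longrightarrow> s < T \<Longrightarrow> E' s \<le> K * E s"
  shows "E T \<le> 0"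
proof -
  define Q where "Q s = exp (- K * s) * E s" for s
  have "Q T \<le> Q 0"
  proof (rule DERIV_nonpos_imp_decreasing_open[OF T])
    fix s assume s: "0 < s" "s < T"
    have "(Q has_real_derivative exp (- K * s) * (E' s - K * E s)) (at s)"
      unfolding Q_def[abs_def] using deriv[OF s]
      by (auto intro!: derivative_eq_intros simp: algebra_simps)
    moreover have "exp (- K * s) * (E' s - K * E s) \<le> 0"
      using bound[OF s] by (simp add: mult_nonneg_nonpos)
    ultimately show "\<exists>l. (Q has_real_derivative l) (at s) \<and> l \<le> 0" by blast
  next
    show "continuous_on {0..T} Q"
      unfolding Q_def[abs_def] by (intro continuous_intros cont)
  qed
  then show ?thesis by (simp add: Q_def start mult_le_0_iff)
qed

lemma inner_field_diff_le:
  fixes F :: "('i::finite \<Rightarrow> real) \<Rightarrow> 'i \<Rightarrow> real"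
  assumes lip: "\<And>j. \<bar>F p j - F q j\<bar> \<le> L * l1_dist p q" and L: "0 \<le> L"
  shows "(\<Sum>j\<in>UNIV. (p j - q j) * (F p j - F q j)) \<le> L * CARD('i) * (\<Sum>j\<in>UNIV. (p j - q j)\<^sup>2)"
proof -
  have "(\<Sum>j\<in>UNIV. (p j - q j) * (F p j - F q j)) \<le> (\<Sum>j\<in>UNIV. \<bar>p j - q j\<bar> * (L * l1_dist p q))"
  proof (rule sum_mono)
    fix j
    have "(p j - q j) * (F p j - F q j) \<le> \<bar>p j - q j\<bar> * \<bar>F p j - F q j\<bar>"
      by (metis abs_ge_self abs_mult)
    also have "\<dots> \<le> \<bar>p j - q j\<bar> * (L * l1_dist p q)"
      using lip by (rule mult_left_mono) simp
    finally show "(p j - q j) * (F p j - F q j) \<le> \<bar>p j - q j\<bar> * (L * l1_dist p q)" .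
  qed
  also have "\<dots> = L * (l1_dist p q)\<^sup>2"
    by (simp add: power2_eq_square sum_distrib_left mult_ac l1_dist_def[of p q])
  also have "\<dots> \<le> L * (CARD('i) * (\<Sum>j\<in>UNIV. (p j - q j)\<^sup>2))"
    using L by (intro mult_left_mono l1_dist_squared_le)
  finally show ?thesis by (simp add: mult.assoc)
qed

lemma solves_ivp_unique:
  fixes F :: "('i::finite \<Rightarrow> real) \<Rightarrow> 'i \<Rightarrow> real"
  assumes F: "locally_lipschitz_field F"
    and x: "solves_ivp F x0 x" and y: "solves_ivp F x0 y" and T: "0 \<le> T"
  shows "x T = y T"
proof -
  have x_cont: "\<And>j. continuous_on {0..} (\<lambda>t. x t j)"
    and x_deriv: "\<And>t j. 0 < t \<Longrightarrow> ((\<lambda>s. x s j) has_real_derivative F (x t) j) (at t)"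
    and y_cont: "\<And>j. continuous_on {0..} (\<lambda>t. y t j)"
    and y_deriv: "\<And>t j. 0 < t \<Longrightarrow> ((\<lambda>s. y s j) has_real_derivative F (y t) j) (at t)"
    and "x 0 = y 0"
    using x y unfolding solves_ivp_def by auto
  obtain Cx where Cx: "\<And>s. s \<in> {0..T} \<Longrightarrow> x s \<in> cube Cx"
    using continuous_curve_in_cube[of x T] x_cont by blast
  obtain Cy where Cy: "\<And>s. s \<in> {0..T} \<Longrightarrow> y s \<in> cube Cy"
    using continuous_curve_in_cube[of y T] y_cont by blast
  have in_cube: "x s \<in> cube (max Cx Cy)" "y s \<in> cube (max Cx Cy)" if "s \<in> {0..T}" for s
    using Cx[OF that] Cy[OF that] cube_mono[of Cx "max Cx Cy"] cube_mono[of Cy "max Cx Cy"]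
    by auto
  obtain L where "0 \<le> L" and L: "\<And>z z' j. z \<in> cube (max Cx Cy) \<Longrightarrow> z' \<in> cube (max Cx Cy) \<Longrightarrow>
      \<bar>F z j\<bar> \<le> L \<and> \<bar>F z j - F z' j\<bar> \<le> L * l1_dist z z'"
    using locally_lipschitz_fieldE[OF F, of "max Cx Cy"] by blast
  define E where "E s = (\<Sum>j\<in>UNIV. (x s j - y s j)\<^sup>2)" for s
  define E' where "E' s = 2 * (\<Sum>j\<in>UNIV. (x s j - y s j) * (F (x s) j - F (y s) j))" for s
  have "E T \<le> 0"
  proof (rule nonpos_if_deriv_le_mult[OF T])
    show "continuous_on {0..T} E"
      unfolding E_def by (intro continuous_intros continuous_on_subset[OF x_cont]
          continuous_on_subset[OF y_cont]) auto
    show "E 0 = 0" by (simp add: E_def \<open>x 0 = y 0\<close>)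
    fix s assume s: "0 < s" "s < T"
    show "(E has_real_derivative E' s) (at s)"
      unfolding E_def[abs_def] E'_def sum_distrib_left
    proof (rule DERIV_sum)
      fix j
      show "((\<lambda>s. (x s j - y s j)\<^sup>2) has_real_derivative
          2 * ((x s j - y s j) * (F (x s) j - F (y s) j))) (at s)"
        using DERIV_power[OF DERIV_diff[OF x_deriv[OF s(1)] y_deriv[OF s(1)]], where n = 2]
        by (simp add: algebra_simps)
    qed
    have "E' s \<le> 2 * (L * CARD('i) * E s)"
      unfolding E'_def E_def using L in_cube s \<open>0 \<le> L\<close>
      by (intro mult_left_mono inner_field_diff_le) auto
    then show "E' s \<le> 2 * L * CARD('i) * E s" by (simp add: mult.assoc)
  qed
  moreover have "0 \<le> E T" unfolding E_def by (rule sum_nonneg) simp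
  ultimately have "(\<Sum>j\<in>UNIV. (x T j - y T j)\<^sup>2) = 0" by (simp add: E_def)
  then show ?thesis by (simp add: sum_nonneg_eq_0_iff fun_eq_iff)
qed

definition clamp_box :: "('i \<Rightarrow> real) \<Rightarrow> ('i \<Rightarrow> real) \<Rightarrow> 'i \<Rightarrow> real" where
  "clamp_box R z j = max (- R j) (min (R j) (z j))"

lemma abs_clamp_box_le: "0 \<le> R j \<Longrightarrow> \<bar>clamp_box R z j\<bar> \<le> R j"
  by (auto simp: clamp_box_def)

lemma clamp_box_eq_self: "\<bar>z j\<bar> \<le> R j \<Longrightarrow> clamp_box R z j = z j"
  by (auto simp: clamp_box_def)

lemma l1_dist_clamp_box_le: "l1_dist (clamp_box R z) (clamp_box R z') \<le> l1_dist z z'"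
  unfolding l1_dist_def clamp_box_def by (rule sum_mono) (auto simp: max_def min_def abs_if)

lemma bounded_lipschitz_field_clamp_box:
  fixes F :: "('i::finite \<Rightarrow> real) \<Rightarrow> 'i \<Rightarrow> real"
  assumes F: "locally_lipschitz_field F" and R: "\<And>j. 0 \<le> R j"
  obtains M where "bounded_lipschitz_field (\<lambda>z. F (clamp_box R z)) M"
proof -
  define C where "C = (\<Sum>j\<in>UNIV. R j)"
  have "R l \<le> C" for l
    unfolding C_def by (rule member_le_sum) (auto simp: R)
  then have clamp_in_cube: "clamp_box R z \<in> cube C" for z
    unfolding cube_def using abs_clamp_box_le[of R, OF R] order_trans by blast
  obtain M where "0 \<le> M" and M: "\<And>y z j. y \<in> cube C \<Longrightarrow> z \<in> cube C \<Longrightarrow>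
      \<bar>F y j\<bar> \<le> M \<and> \<bar>F y j - F z j\<bar> \<le> M * l1_dist y z"
    using locally_lipschitz_fieldE[OF F, of C] by blast
  have "bounded_lipschitz_field (\<lambda>z. F (clamp_box R z)) M"
  proof
    show "\<bar>F (clamp_box R z) i\<bar> \<le> M" for z i
      using M[OF clamp_in_cube clamp_in_cube] by simp
    fix z z' i
    have "\<bar>F (clamp_box R z) i - F (clamp_box R z') i\<bar>
        \<le> M * l1_dist (clamp_box R z) (clamp_box R z')"
      using M[OF clamp_in_cube clamp_in_cube] by simp
    also have "\<dots> \<le> M * l1_dist z z'"
      using \<open>0 \<le> M\<close> by (intro mult_left_mono l1_dist_clamp_box_le)
    finally show "\<bar>F (clamp_box R z) i - F (clamp_box R z') i\<bar> \<le> M * l1_dist z z'" .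
  qed
  then show ?thesis by (rule that)
qed

lemma solvable_in_trapping_box:
  fixes F :: "('i::finite \<Rightarrow> real) \<Rightarrow> 'i \<Rightarrow> real"
  assumes F: "locally_lipschitz_field F"
    and R_pos: "\<And>j. 0 < R j" and start: "\<And>j. \<bar>x0 j\<bar> \<le> R j"
    and upper: "\<And>y j. (\<And>l. \<bar>y l\<bar> \<le> R l) \<Longrightarrow> y j = R j \<Longrightarrow> F y j < 0"
    and lower: "\<And>y j. (\<And>l. \<bar>y l\<bar> \<le> R l) \<Longrightarrow> y j = - R j \<Longrightarrow> 0 < F y j"
  shows "\<exists>x. solves_ivp F x0 x"
proof -
  have R: "0 \<le> R j" for j using R_pos[of j] by simp
  define G where "G z = F (clamp_box R z)" for z
  obtain M where "bounded_lipschitz_field G M"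
    unfolding G_def by (rule bounded_lipschitz_field_clamp_box[OF F R])
  then obtain x where x: "solves_ivp G x0 x"
    using bounded_lipschitz_field_solvable by blast
  have in_box: "\<bar>x t j\<bar> \<le> R j" if "0 \<le> t" for t j
  proof (rule solves_ivp_stays_in_box[OF x start _ _ that])
    fix y j assume "R j \<le> y j"
    then have "clamp_box R y j = R j" using R_pos[of j] by (simp add: clamp_box_def)
    then show "G y j < 0" unfolding G_def by (rule upper[OF abs_clamp_box_le[of R, OF R]])
  next
    fix y j assume "y j \<le> - R j"
    then have "clamp_box R y j = - R j" using R_pos[of j] by (simp add: clamp_box_def)
    then show "0 < G y j" unfolding G_def by (rule lower[OF abs_clamp_box_le[of R, OF R]])
  qed
  have "G (x t) = F (x t)" if "0 < t" for t
  proof -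
    have "clamp_box R (x t) = x t"
      using in_box[of t] that by (simp add: fun_eq_iff clamp_box_eq_self)
    then show ?thesis by (simp add: G_def)
  qed
  with x have "solves_ivp F x0 x" unfolding solves_ivp_def by metis
  then show ?thesis by blast
qed

section \<open>The network\<close>

lemma eventually_less_mult_at_top:
  fixes c d :: real
  assumes "0 < d"
  shows "eventually (\<lambda>R. c < d * R) at_top"
  using eventually_gt_at_top[of "c / d"]
  by eventually_elim (use assms in \<open>simp add: pos_divide_less_eq mult.commute\<close>)

definition join_state :: "('n \<Rightarrow> real) \<Rightarrow> real \<Rightarrow> 'n option \<Rightarrow> real" where
  "join_state u \<rho> j = (case j of Some i \<Rightarrow> u i | None \<Rightarrow> \<rho>)"

definition network_field ::
  "('n::finite \<Rightarrow> real) \<Rightarrow> ('n \<Rightarrow> 'n \<Rightarrow> real) \<Rightarrow> ('n \<Rightarrow> real \<Rightarrow> real) \<Rightarrow> real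
   \<Rightarrow> ('n \<Rightarrow> real \<Rightarrow> real) \<Rightarrow> ('n \<Rightarrow> real) \<Rightarrow> real \<Rightarrow> real \<Rightarrow> real \<Rightarrow> ('n \<Rightarrow> real) \<Rightarrow> real
   \<Rightarrow> ('n option \<Rightarrow> real) \<Rightarrow> 'n option \<Rightarrow> real" where
  "network_field a w f k \<phi> J P r V \<gamma> b z c = (case c of
     Some i \<Rightarrow> - a i * z (Some i) + (\<Sum>j\<in>UNIV. w i j * f j (z (Some j)))
       + k * \<phi> i (z None) * z (Some i) + J i - P * z (Some i) * (\<Sum>j\<in>UNIV. Gam r V (z (Some j)))
   | None \<Rightarrow> (\<Sum>i\<in>UNIV. \<gamma> i * z (Some i)) - b * z None)"

lemma all_option_iff: "(\<forall>j. P j) \<longleftrightarrow> P None \<and> (\<forall>i. P (Some i))"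
  by (metis option.exhaust)

lemma is_global_solution_iff_solves_ivp:
  "is_global_solution a w f k \<phi> J P r V \<gamma> b u0 \<rho>0 u \<rho> \<longleftrightarrow>
    solves_ivp (network_field a w f k \<phi> J P r V \<gamma> b) (join_state u0 \<rho>0)
      (\<lambda>t. join_state (u t) (\<rho> t))"
  unfolding is_global_solution_def solves_ivp_def all_option_iff fun_eq_iff
  by (auto simp: join_state_def network_field_def)

lemma network_field_locally_lipschitz:
  assumes "\<And>i. locally_lipschitz_real (f i)" "\<And>i. locally_lipschitz_real (\<phi> i)" "0 < r"
  shows "locally_lipschitz_field (network_field a w f k \<phi> J P r V \<gamma> b)"
  unfolding locally_lipschitz_field_def
proof (intro allI)
  fix C :: real and c :: "'a option"
  have f: "bounded_lipschitz_on_cube C (\<lambda>y. f l (y (Some l)))" for l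
    using lipschitz_on_interval_if_locally_lipschitz_real[OF assms(1)]
    by (metis bounded_lipschitz_on_cube_compose)
  have \<phi>: "bounded_lipschitz_on_cube C (\<lambda>y. \<phi> l (y None))" for l
    using lipschitz_on_interval_if_locally_lipschitz_real[OF assms(2)]
    by (metis bounded_lipschitz_on_cube_compose)
  have Gam: "bounded_lipschitz_on_cube C (\<lambda>y. Gam r V (y (Some l)))" for l
    by (rule bounded_lipschitz_on_cube_compose)
      (rule lipschitz_on_subset[OF Gam_lipschitz[OF assms(3)]], simp)
  show "bounded_lipschitz_on_cube C (\<lambda>y. network_field a w f k \<phi> J P r V \<gamma> b y c)"
    by (cases c) (auto simp: network_field_def intro!: bounded_lipschitz_on_cube_intros f \<phi> Gam)
qed

text \<open>Since \<open>\<phi> i \<le> 1\<close>, the self-excitation \<open>k * \<phi> i \<rho> * u\<^sub>i\<close> cannot beat the decay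
  \<open>- a i * u\<^sub>i\<close>, and the inhibition term has the sign of \<open>- u\<^sub>i\<close>.\<close>

lemma network_field_neuron_inward:
  fixes y :: "'n::finite option \<Rightarrow> real"
  assumes "k < a i" "0 < k" "0 < \<eta> i" "0 < P" "0 \<le> R"
    and f_bdd: "\<And>j s. \<bar>f j s\<bar> \<le> \<beta>" and \<phi>: "\<And>s. \<phi> i s = 1 - \<eta> i * s\<^sup>2"
    and R_large: "(\<Sum>j\<in>UNIV. \<bar>w i j\<bar> * \<beta>) + \<bar>J i\<bar> < (a i - k) * R"
  shows "y (Some i) = R \<Longrightarrow> network_field a w f k \<phi> J P r V \<gamma> b y (Some i) < 0"
    and "y (Some i) = - R \<Longrightarrow> 0 < network_field a w f k \<phi> J P r V \<gamma> b y (Some i)"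
proof -
  define W where "W = (\<Sum>j\<in>UNIV. w i j * f j (y (Some j)))"
  define \<Gamma> where "\<Gamma> = (\<Sum>j\<in>UNIV. Gam r V (y (Some j)))"
  have "\<bar>W\<bar> \<le> (\<Sum>j\<in>UNIV. \<bar>w i j * f j (y (Some j))\<bar>)"
    unfolding W_def by (rule sum_abs)
  also have "\<dots> \<le> (\<Sum>j\<in>UNIV. \<bar>w i j\<bar> * \<beta>)"
    by (rule sum_mono) (simp add: abs_mult f_bdd mult_left_mono)
  finally have W: "\<bar>W\<bar> \<le> (\<Sum>j\<in>UNIV. \<bar>w i j\<bar> * \<beta>)" .
  have "0 \<le> P * R * \<Gamma>"
    unfolding \<Gamma>_def Gam_def using assms by (intro mult_nonneg_nonneg sum_nonneg) auto
  moreover have "0 \<le> k * \<eta> i * (y None)\<^sup>2 * R" using assms by simp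
  moreover have "k * \<phi> i (y None) * R = k * R - k * \<eta> i * (y None)\<^sup>2 * R"
    by (simp add: \<phi> algebra_simps)
  ultimately show "y (Some i) = R \<Longrightarrow> network_field a w f k \<phi> J P r V \<gamma> b y (Some i) < 0"
    and "y (Some i) = - R \<Longrightarrow> 0 < network_field a w f k \<phi> J P r V \<gamma> b y (Some i)"
    using W R_large
    by (auto simp: network_field_def W_def[symmetric] \<Gamma>_def[symmetric] algebra_simps)
qed

lemma network_field_density_inward:
  fixes y :: "'n::finite option \<Rightarrow> real"
  assumes y: "\<And>l. \<bar>y (Some l)\<bar> \<le> R" and S_large: "(\<Sum>i\<in>UNIV. \<bar>\<gamma> i\<bar>) * R < b * S"
  shows "y None = S \<Longrightarrow> network_field a w f k \<phi> J P r V \<gamma> b y None < 0"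
    and "y None = - S \<Longrightarrow> 0 < network_field a w f k \<phi> J P r V \<gamma> b y None"
proof -
  have "\<bar>\<Sum>i\<in>UNIV. \<gamma> i * y (Some i)\<bar> \<le> (\<Sum>i\<in>UNIV. \<bar>\<gamma> i * y (Some i)\<bar>)" by (rule sum_abs)
  also have "\<dots> \<le> (\<Sum>i\<in>UNIV. \<bar>\<gamma> i\<bar> * R)"
    by (rule sum_mono) (simp add: abs_mult y mult_left_mono)
  finally have "\<bar>\<Sum>i\<in>UNIV. \<gamma> i * y (Some i)\<bar> \<le> (\<Sum>i\<in>UNIV. \<bar>\<gamma> i\<bar>) * R"
    by (simp add: sum_distrib_right)
  then show "y None = S \<Longrightarrow> network_field a w f k \<phi> J P r V \<gamma> b y None < 0"
    and "y None = - S \<Longrightarrow> 0 < network_field a w f k \<phi> J P r V \<gamma> b y None"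
    using S_large by (auto simp: network_field_def)
qed

locale neural_network =
  fixes a \<eta> J \<gamma> :: "'n::finite \<Rightarrow> real" and w :: "'n \<Rightarrow> 'n \<Rightarrow> real"
    and f \<phi> :: "'n \<Rightarrow> real \<Rightarrow> real" and b \<beta> k P r V :: real
  assumes b_pos: "0 < b" and eta_pos: "\<And>i. 0 < \<eta> i" and k_pos: "0 < k"
    and r_pos: "0 < r" and P_pos: "0 < P"
    and f_lip: "\<And>i. locally_lipschitz_real (f i)" and phi_lip: "\<And>i. locally_lipschitz_real (\<phi> i)"
    and a_gt_k: "\<And>i. k < a i" and f_bdd: "\<And>i s. \<bar>f i s\<bar> \<le> \<beta>"
    and phi_def: "\<And>i s. \<phi> i s = 1 - \<eta> i * s\<^sup>2"
begin

abbreviation F :: "('n option \<Rightarrow> real) \<Rightarrow> 'n option \<Rightarrow> real" where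
  "F \<equiv> network_field a w f k \<phi> J P r V \<gamma> b"

lemma locally_lipschitz_F: "locally_lipschitz_field F"
  using f_lip phi_lip r_pos by (rule network_field_locally_lipschitz)

lemma neuron_radius_exists:
  fixes u0 :: "'n \<Rightarrow> real"
  obtains R where "0 < R" "\<And>i. \<bar>u0 i\<bar> \<le> R"
    "\<And>i. (\<Sum>j\<in>UNIV. \<bar>w i j\<bar> * \<beta>) + \<bar>J i\<bar> < (a i - k) * R"
proof -
  have "eventually (\<lambda>R. 0 < R \<and> \<bar>u0 i\<bar> \<le> R \<and>
      (\<Sum>j\<in>UNIV. \<bar>w i j\<bar> * \<beta>) + \<bar>J i\<bar> < (a i - k) * R) at_top" for i
    using a_gt_k[of i]
    by (intro eventually_conj eventually_gt_at_top eventually_ge_at_top eventually_less_mult_at_top)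
      simp
  then have "eventually (\<lambda>R. \<forall>i. 0 < R \<and> \<bar>u0 i\<bar> \<le> R \<and>
      (\<Sum>j\<in>UNIV. \<bar>w i j\<bar> * \<beta>) + \<bar>J i\<bar> < (a i - k) * R) at_top"
    by (rule eventually_all_finite)
  from eventually_happens'[OF trivial_limit_at_top_linorder this] that show ?thesis
    by blast
qed

lemma trapping_box:
  obtains R where "\<And>j. 0 < R j" "\<And>j. \<bar>join_state u0 \<rho>0 j\<bar> \<le> R j"
    "\<And>y j. (\<And>l. \<bar>y l\<bar> \<le> R l) \<Longrightarrow> y j = R j \<Longrightarrow> F y j < 0"
    "\<And>y j. (\<And>l. \<bar>y l\<bar> \<le> R l) \<Longrightarrow> y j = - R j \<Longrightarrow> 0 < F y j"
proof -
  obtain R where R: "0 < R" "\<And>i. \<bar>u0 i\<bar> \<le> R"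
      "\<And>i. (\<Sum>j\<in>UNIV. \<bar>w i j\<bar> * \<beta>) + \<bar>J i\<bar> < (a i - k) * R"
    using neuron_radius_exists[of u0] by blast
  have "eventually (\<lambda>S. 0 < S \<and> \<bar>\<rho>0\<bar> \<le> S \<and> (\<Sum>i\<in>UNIV. \<bar>\<gamma> i\<bar>) * R < b * S) at_top"
    by (intro eventually_conj eventually_gt_at_top eventually_ge_at_top eventually_less_mult_at_top
        b_pos)
  from eventually_happens'[OF trivial_limit_at_top_linorder this]
  obtain S where S: "0 < S" "\<bar>\<rho>0\<bar> \<le> S" "(\<Sum>i\<in>UNIV. \<bar>\<gamma> i\<bar>) * R < b * S"
    by blast
  show ?thesis
  proof (rule that[of "join_state (\<lambda>_. R) S"])
    show "0 < join_state (\<lambda>_. R) S j" "\<bar>join_state u0 \<rho>0 j\<bar> \<le> join_state (\<lambda>_. R) S j" for j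
      using R S by (auto simp: join_state_def split: option.split)
    fix y :: "'n option \<Rightarrow> real" and j assume y: "\<And>l. \<bar>y l\<bar> \<le> join_state (\<lambda>_. R) S l"
    have y_neurons: "\<bar>y (Some l)\<bar> \<le> R" for l using y[of "Some l"] by (simp add: join_state_def)
    note neuron = network_field_neuron_inward[OF a_gt_k k_pos eta_pos P_pos less_imp_le[OF R(1)]
        f_bdd phi_def R(3)]
    note density = network_field_density_inward[where y = y, OF y_neurons S(3)]
    show "y j = join_state (\<lambda>_. R) S j \<Longrightarrow> F y j < 0"
      "y j = - join_state (\<lambda>_. R) S j \<Longrightarrow> 0 < F y j"
      by (cases j; simp add: join_state_def neuron density)+
  qed
qed

lemma global_solution_exists: "\<exists>u \<rho>. is_global_solution a w f k \<phi> J P r V \<gamma> b u0 \<rho>0 u \<rho>"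
proof -
  obtain R where R: "\<And>j. 0 < R j" "\<And>j. \<bar>join_state u0 \<rho>0 j\<bar> \<le> R j"
    "\<And>y j. (\<And>l. \<bar>y l\<bar> \<le> R l) \<Longrightarrow> y j = R j \<Longrightarrow> F y j < 0"
    "\<And>y j. (\<And>l. \<bar>y l\<bar> \<le> R l) \<Longrightarrow> y j = - R j \<Longrightarrow> 0 < F y j"
    using trapping_box[of u0 \<rho>0] by blast
  from solvable_in_trapping_box[of F R "join_state u0 \<rho>0", OF locally_lipschitz_F R]
  obtain x where x: "solves_ivp F (join_state u0 \<rho>0) x" by blast
  have "(\<lambda>t. join_state (\<lambda>i. x t (Some i)) (x t None)) = x"
    by (auto simp: fun_eq_iff join_state_def split: option.split)
  with x have "is_global_solution a w f k \<phi> J P r V \<gamma> b u0 \<rho>0 (\<lambda>t i. x t (Some i)) (\<lambda>t. x t None)"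
    by (simp add: is_global_solution_iff_solves_ivp)
  then show ?thesis by blast
qed

lemma global_solution_unique:
  assumes "is_global_solution a w f k \<phi> J P r V \<gamma> b u0 \<rho>0 u \<rho>"
    and "is_global_solution a w f k \<phi> J P r V \<gamma> b u0 \<rho>0 u' \<rho>'" and "0 \<le> t"
  shows "u t = u' t \<and> \<rho> t = \<rho>' t"
proof -
  have "join_state (u t) (\<rho> t) = join_state (u' t) (\<rho>' t)"
    using assms unfolding is_global_solution_iff_solves_ivp
    by (rule solves_ivp_unique[OF locally_lipschitz_F])
  then show ?thesis by (auto simp: fun_eq_iff join_state_def all_option_iff)
qed

end

theorem theorem2p1:
  fixes a \<eta> J \<gamma> :: "'n::finite \<Rightarrow> real"
    and w :: "'n \<Rightarrow> 'n \<Rightarrow> real"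
    and f \<phi> :: "'n \<Rightarrow> real \<Rightarrow> real"
    and b \<beta> k P r V :: real
  assumes m2: "CARD('n) \<ge> 2"
    and a_pos: "\<And>i. a i > 0" and b_pos: "b > 0" and beta_pos: "\<beta> > 0"
    and eta_pos: "\<And>i. \<eta> i > 0" and k_pos: "k > 0"
    and r_pos: "r > 0" and P_pos: "P > 0"
    and f_lip: "\<And>i. locally_lipschitz_real (f i)"
    and phi_lip: "\<And>i. locally_lipschitz_real (\<phi> i)"
    and a_gt_k: "\<And>i. a i > k"
    and f_bdd: "\<And>i s. \<bar>f i s\<bar> \<le> \<beta>"
    and phi_def: "\<And>i s. \<phi> i s = 1 - \<eta> i * s\<^sup>2"
  shows "\<forall>(u0 :: 'n \<Rightarrow> real) (\<rho>0 :: real).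
           (\<exists>u \<rho>. is_global_solution a w f k \<phi> J P r V \<gamma> b u0 \<rho>0 u \<rho>) \<and>
           (\<forall>u \<rho> u' \<rho>'. is_global_solution a w f k \<phi> J P r V \<gamma> b u0 \<rho>0 u \<rho> \<and>
                          is_global_solution a w f k \<phi> J P r V \<gamma> b u0 \<rho>0 u' \<rho>' \<longrightarrow>
                          (\<forall>t\<ge>0. u t = u' t \<and> \<rho> t = \<rho>' t))"
proof -
  interpret neural_network a \<eta> J \<gamma> w f \<phi> b \<beta> k P r V
    using b_pos eta_pos k_pos r_pos P_pos f_lip phi_lip a_gt_k f_bdd phi_def by unfold_locales
  show ?thesis using global_solution_exists global_solution_unique by blast
qed

end
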